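(* For every twin-free bipartite graph $G$ of order $n$, we have $i_{\max}(G) \ge \lfloor n/2\rfloor+1$, and this inequality is sharp.
   Context: $i_{\max}(G)$ denotes the number of maximal independent sets of $G$. A graph is twin-free if no two vertices have the same open neighbourhood. *)

theory Defs
  imports Main
begin

definition simple_graph :: "'a set \<Rightarrow> ('a \<Rightarrow> 'a \<Rightarrow> bool) \<Rightarrow> bool" where
  "simple_graph V E \<longleftrightarrow> finite V \<and> (\<forall>u v. E u v \<longrightarrow> u \<in> V \<and> v \<in> V)
     \<and> (\<forall>u v. E u v \<longrightarrow> E v u) \<and> (\<forall>u. \<not> E u u)"

definition bipartite :: "'a set \<Rightarrow> ('a \<Rightarrow> 'a \<Rightarrow> bool) \<Rightarrow> bool" where
  "bipartite V E \<longleftrightarrow> (\<exists>A B. A \<union> B = V \<and> A \<inter> B = {} \<and>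
     (\<forall>u v. E u v \<longrightarrow> (u \<in> A \<and> v \<in> B) \<or> (u \<in> B \<and> v \<in> A)))"

definition open_nbhd :: "'a set \<Rightarrow> ('a \<Rightarrow> 'a \<Rightarrow> bool) \<Rightarrow> 'a \<Rightarrow> 'a set" where
  "open_nbhd V E v = {u \<in> V. E v u}"

definition twin_free :: "'a set \<Rightarrow> ('a \<Rightarrow> 'a \<Rightarrow> bool) \<Rightarrow> bool" where
  "twin_free V E \<longleftrightarrow> (\<forall>u\<in>V. \<forall>v\<in>V. u \<noteq> v \<longrightarrow> open_nbhd V E u \<noteq> open_nbhd V E v)"

definition independent_set :: "'a set \<Rightarrow> ('a \<Rightarrow> 'a \<Rightarrow> bool) \<Rightarrow> 'a set \<Rightarrow> bool" where
  "independent_set V E S \<longleftrightarrow> S \<subseteq> V \<and> (\<forall>u\<in>S. \<forall>v\<in>S. \<not> E u v)"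

definition maximal_independent_set :: "'a set \<Rightarrow> ('a \<Rightarrow> 'a \<Rightarrow> bool) \<Rightarrow> 'a set \<Rightarrow> bool" where
  "maximal_independent_set V E S \<longleftrightarrow> independent_set V E S \<and>
     (\<forall>T. independent_set V E T \<and> S \<subseteq> T \<longrightarrow> T = S)"

definition i_max :: "'a set \<Rightarrow> ('a \<Rightarrow> 'a \<Rightarrow> bool) \<Rightarrow> nat" where
  "i_max V E = card {S. maximal_independent_set V E S}"

end

theory Submission
  imports Defs
begin

text \<open>Let \<open>(A, B)\<close> be a bipartition in which no vertex of \<open>A\<close> is isolated. For \<open>a \<in> A\<close>, the
  vertices \<open>a' \<in> A\<close> with \<open>N(a') \<subseteq> N(a)\<close> together with \<open>B - N(a)\<close> form a maximal independent
  set containing \<open>a\<close>; by twin-freeness distinct vertices of \<open>A\<close> give distinct sets, and \<open>B\<close> is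
  one more. Twin-freeness also leaves at most one isolated vertex, so the larger side without
  it has at least \<open>\<lfloor>n/2\<rfloor>\<close> vertices. Equality holds for the half graph on \<open>2k\<close> vertices, plus an
  isolated vertex when \<open>n\<close> is odd: its maximal independent sets are the \<open>k + 1\<close> windows
  \<open>{t..<k+t}\<close> together with the isolated vertex.\<close>

definition is_bipartition :: "'a set \<Rightarrow> ('a \<Rightarrow> 'a \<Rightarrow> bool) \<Rightarrow> 'a set \<Rightarrow> 'a set \<Rightarrow> bool" where
  "is_bipartition V E A B \<longleftrightarrow> A \<union> B = V \<and> A \<inter> B = {} \<and>
     (\<forall>u v. E u v \<longrightarrow> (u \<in> A \<and> v \<in> B) \<or> (u \<in> B \<and> v \<in> A))"

lemma bipartite_iff_is_bipartition: "bipartite V E \<longleftrightarrow> (\<exists>A B. is_bipartition V E A B)"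
  unfolding bipartite_def is_bipartition_def ..

lemma is_bipartition_swap: "is_bipartition V E A B \<Longrightarrow> is_bipartition V E B A"
  unfolding is_bipartition_def by blast

lemma maximal_independent_setI:
  assumes "independent_set V E S" and "\<And>v. v \<in> V \<Longrightarrow> v \<notin> S \<Longrightarrow> \<exists>u\<in>S. E v u"
  shows "maximal_independent_set V E S"
  using assms unfolding maximal_independent_set_def independent_set_def by blast

lemma finite_maximal_independent_sets:
  "finite V \<Longrightarrow> finite {S. maximal_independent_set V E S}"
  by (rule finite_subset[of _ "Pow V"])
    (auto simp: maximal_independent_set_def independent_set_def)

lemma maximal_independent_sets_eq_image:
  assumes "\<And>t. t \<in> T \<Longrightarrow> maximal_independent_set V E (F t)"
    and "\<And>S. independent_set V E S \<Longrightarrow> \<exists>t\<in>T. S \<subseteq> F t"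
  shows "{S. maximal_independent_set V E S} = F ` T"
proof
  show "F ` T \<subseteq> {S. maximal_independent_set V E S}"
    using assms(1) by blast
  show "{S. maximal_independent_set V E S} \<subseteq> F ` T"
  proof
    fix S assume "S \<in> {S. maximal_independent_set V E S}"
    then have "independent_set V E S" and max: "\<And>U. independent_set V E U \<Longrightarrow> S \<subseteq> U \<Longrightarrow> U = S"
      unfolding maximal_independent_set_def by auto
    then obtain t where "t \<in> T" "S \<subseteq> F t"
      using assms(2) by blast
    moreover have "independent_set V E (F t)"
      using assms(1)[OF \<open>t \<in> T\<close>] unfolding maximal_independent_set_def by simp
    ultimately show "S \<in> F ` T"
      using max by force
  qed
qed

lemma twin_free_isolated_unique:
  assumes "twin_free V E" "u \<in> V" "v \<in> V" "\<forall>w. \<not> E u w" "\<forall>w. \<not> E v w"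
  shows "u = v"
  using assms unfolding twin_free_def open_nbhd_def by auto

definition mis_below :: "'a set \<Rightarrow> 'a set \<Rightarrow> ('a \<Rightarrow> 'a \<Rightarrow> bool) \<Rightarrow> 'a \<Rightarrow> 'a set" where
  "mis_below A B E a = {a' \<in> A. \<forall>b. E a' b \<longrightarrow> E a b} \<union> {b \<in> B. \<not> E a b}"

lemma maximal_independent_set_mis_below:
  assumes "simple_graph V E" "is_bipartition V E A B" "a \<in> A"
  shows "maximal_independent_set V E (mis_below A B E a)"
proof (rule maximal_independent_setI)
  show "independent_set V E (mis_below A B E a)"
    using assms unfolding independent_set_def mis_below_def is_bipartition_def simple_graph_def
    by blast
next
  fix v assume "v \<in> V" "v \<notin> mis_below A B E a"
  then consider "v \<in> B" "E a v" | b where "v \<in> A" "E v b" "\<not> E a b"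
    using assms(2) unfolding mis_below_def is_bipartition_def by blast
  then show "\<exists>u \<in> mis_below A B E a. E v u"
  proof cases
    case 1
    have "a \<in> mis_below A B E a"
      using \<open>a \<in> A\<close> unfolding mis_below_def by blast
    moreover have "E v a"
      using 1 assms(1) unfolding simple_graph_def by blast
    ultimately show ?thesis ..
  next
    case 2
    then have "b \<in> B"
      using assms(2) unfolding is_bipartition_def by blast
    with 2 show ?thesis
      unfolding mis_below_def by blast
  qed
qed

lemma inj_on_mis_below:
  assumes "twin_free V E" "is_bipartition V E A B"
  shows "inj_on (mis_below A B E) A"
proof
  fix a c assume "a \<in> A" "c \<in> A" and eq: "mis_below A B E a = mis_below A B E c"
  have "a \<in> mis_below A B E c" "c \<in> mis_below A B E a"
    using \<open>a \<in> A\<close> \<open>c \<in> A\<close> eq unfolding mis_below_def by auto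
  moreover have "A \<inter> B = {}"
    using assms(2) unfolding is_bipartition_def by blast
  ultimately have "\<forall>b. E a b \<longleftrightarrow> E c b"
    using \<open>a \<in> A\<close> \<open>c \<in> A\<close> unfolding mis_below_def by auto
  then have "open_nbhd V E a = open_nbhd V E c"
    unfolding open_nbhd_def by simp
  then show "a = c"
    using assms \<open>a \<in> A\<close> \<open>c \<in> A\<close> unfolding twin_free_def is_bipartition_def by blast
qed

lemma maximal_independent_set_side:
  assumes "is_bipartition V E A B" "\<forall>a\<in>A. \<exists>b. E a b"
  shows "maximal_independent_set V E B"
proof (rule maximal_independent_setI)
  show "independent_set V E B"
    using assms(1) unfolding independent_set_def is_bipartition_def by blast
  fix v assume "v \<in> V" "v \<notin> B"
  with assms show "\<exists>u\<in>B. E v u"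
    unfolding is_bipartition_def by blast
qed

lemma i_max_ge_side:
  assumes "simple_graph V E" "twin_free V E" "is_bipartition V E A B" "\<forall>a\<in>A. \<exists>b. E a b"
  shows "card A + 1 \<le> i_max V E"
proof -
  have "finite V"
    using assms(1) by (simp add: simple_graph_def)
  then have "finite A"
    using assms(3) unfolding is_bipartition_def by blast
  have "B \<notin> mis_below A B E ` A"
    using assms(3) unfolding mis_below_def is_bipartition_def by blast
  then have "card A + 1 = card (insert B (mis_below A B E ` A))"
    using \<open>finite A\<close> inj_on_mis_below[OF assms(2,3)] by (simp add: card_image)
  also have "\<dots> \<le> card {S. maximal_independent_set V E S}"
    using maximal_independent_set_mis_below[OF assms(1,3)] maximal_independent_set_side[OF assms(3,4)]
    by (intro card_mono finite_maximal_independent_sets \<open>finite V\<close>) auto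
  finally show ?thesis
    unfolding i_max_def .
qed

lemma i_max_ge_non_isolated_side:
  assumes "simple_graph V E" "twin_free V E" "is_bipartition V E A B"
  shows "card {a \<in> A. \<exists>b. E a b} + 1 \<le> i_max V E"
proof (rule i_max_ge_side[OF assms(1,2)])
  show "is_bipartition V E {a \<in> A. \<exists>b. E a b} (V - {a \<in> A. \<exists>b. E a b})"
    using assms(1,3) unfolding is_bipartition_def simple_graph_def by blast
qed auto

lemma i_max_ge_bipartite_twin_free:
  assumes "simple_graph V E" "bipartite V E" "twin_free V E"
  shows "card V div 2 + 1 \<le> i_max V E"
proof -
  obtain A B where AB: "is_bipartition V E A B"
    using assms(2) bipartite_iff_is_bipartition by blast
  define A' where "A' = {a \<in> A. \<exists>b. E a b}"
  define B' where "B' = {b \<in> B. \<exists>a. E b a}"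
  define isolated where "isolated = {v \<in> V. \<forall>w. \<not> E v w}"
  have "finite V"
    using assms(1) by (simp add: simple_graph_def)
  then have "card isolated \<le> 1"
    using twin_free_isolated_unique[OF assms(3)] card_le_Suc0_iff_eq[of isolated]
    unfolding isolated_def by auto
  have "V = (A' \<union> B') \<union> isolated"
    using AB unfolding is_bipartition_def isolated_def A'_def B'_def by blast
  then have "card V \<le> card (A' \<union> B') + card isolated"
    using card_Un_le by metis
  also have "\<dots> \<le> card A' + card B' + card isolated"
    using card_Un_le by simp
  finally have "card V \<le> card A' + card B' + 1"
    using \<open>card isolated \<le> 1\<close> by linarith
  moreover have "card A' + 1 \<le> i_max V E"
    unfolding A'_def using i_max_ge_non_isolated_side[OF assms(1,3) AB] .
  moreover have "card B' + 1 \<le> i_max V E"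
    unfolding B'_def using i_max_ge_non_isolated_side[OF assms(1,3) is_bipartition_swap[OF AB]] .
  ultimately show ?thesis
    by linarith
qed

definition half_graph :: "nat \<Rightarrow> nat \<Rightarrow> nat \<Rightarrow> bool" where
  "half_graph k u v \<longleftrightarrow> (u < k \<and> u + k \<le> v \<and> v < 2*k) \<or> (v < k \<and> v + k \<le> u \<and> u < 2*k)"

lemma open_nbhd_half_graph:
  assumes "2*k \<le> n"
  shows "open_nbhd {0..<n} (half_graph k) u =
    (if u < k then {u+k..<2*k} else if u < 2*k then {..u-k} else {})"
  using assms unfolding open_nbhd_def half_graph_def by auto

lemma half_graph_vertex_from_open_nbhd:
  assumes "2*k \<le> n" "n \<le> 2*k + 1" "u < n"
  shows "u = (let X = open_nbhd {0..<n} (half_graph k) u in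
    if X = {} then 2*k else if 0 \<in> X then k + card X - 1 else k - card X)"
  using assms by (simp add: open_nbhd_half_graph Let_def)

lemma twin_free_half_graph:
  assumes "2*k \<le> n" "n \<le> 2*k + 1"
  shows "twin_free {0..<n} (half_graph k)"
  unfolding twin_free_def
  using half_graph_vertex_from_open_nbhd[OF assms] by (metis atLeastLessThan_iff)

lemma simple_graph_half_graph: "2*k \<le> n \<Longrightarrow> simple_graph {0..<n} (half_graph k)"
  unfolding simple_graph_def half_graph_def by auto

lemma bipartite_half_graph: "2*k \<le> n \<Longrightarrow> bipartite {0..<n} (half_graph k)"
  unfolding bipartite_iff_is_bipartition is_bipartition_def half_graph_def
  by (rule exI[of _ "{0..<k}"], rule exI[of _ "{k..<n}"]) auto

definition half_graph_mis :: "nat \<Rightarrow> nat \<Rightarrow> nat \<Rightarrow> nat set" where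
  "half_graph_mis n k t = {t..<k+t} \<union> {2*k..<n}"

lemma maximal_independent_set_half_graph_mis:
  assumes "2*k \<le> n" "t \<le> k"
  shows "maximal_independent_set {0..<n} (half_graph k) (half_graph_mis n k t)"
proof (rule maximal_independent_setI)
  show "independent_set {0..<n} (half_graph k) (half_graph_mis n k t)"
    using assms unfolding independent_set_def half_graph_mis_def half_graph_def by auto
  fix v assume "v \<in> {0..<n}" "v \<notin> half_graph_mis n k t"
  then consider "v < t" | "k + t \<le> v" "v < 2*k"
    using assms unfolding half_graph_mis_def by fastforce
  then show "\<exists>u \<in> half_graph_mis n k t. half_graph k v u"
  proof cases
    case 1
    then have "k + t - 1 \<in> half_graph_mis n k t" "half_graph k v (k + t - 1)"
      using assms unfolding half_graph_mis_def half_graph_def by auto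
    then show ?thesis ..
  next
    case 2
    then have "t \<in> half_graph_mis n k t" "half_graph k v t"
      using assms unfolding half_graph_mis_def half_graph_def by auto
    then show ?thesis ..
  qed
qed

lemma independent_set_half_graph_subset:
  assumes "independent_set {0..<n} (half_graph k) S"
  shows "\<exists>t\<le>k. S \<subseteq> half_graph_mis n k t"
proof (intro exI conjI)
  define t where "t = Min (insert k (S \<inter> {..<k}))"
  show "t \<le> k"
    unfolding t_def by simp
  have "t \<in> S" if "t < k"
    using that Min_in[of "insert k (S \<inter> {..<k})"] unfolding t_def by fastforce
  show "S \<subseteq> half_graph_mis n k t"
  proof
    fix v assume "v \<in> S"
    then have "v < n"
      using assms unfolding independent_set_def by auto
    consider "v < k" | "k \<le> v" "v < k + t" | "k + t \<le> v" "v < 2*k" | "2*k \<le> v"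
      by linarith
    then show "v \<in> half_graph_mis n k t"
    proof cases
      case 1
      then have "t \<le> v"
        using \<open>v \<in> S\<close> unfolding t_def by simp
      with 1 show ?thesis
        unfolding half_graph_mis_def by simp
    next
      case 3
      then have "half_graph k t v"
        unfolding half_graph_def by simp
      moreover have "t \<in> S"
        using 3 \<open>t < k \<Longrightarrow> t \<in> S\<close> by simp
      ultimately show ?thesis
        using assms \<open>v \<in> S\<close> unfolding independent_set_def by blast
    qed (use \<open>t \<le> k\<close> \<open>v < n\<close> in \<open>auto simp: half_graph_mis_def\<close>)
  qed
qed

lemma i_max_half_graph:
  assumes "2*k \<le> n"
  shows "i_max {0..<n} (half_graph k) = k + 1"
proof -
  have "{S. maximal_independent_set {0..<n} (half_graph k) S} = half_graph_mis n k ` {..k}"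
    by (intro maximal_independent_sets_eq_image maximal_independent_set_half_graph_mis[OF assms])
      (simp_all add: Bex_def independent_set_half_graph_subset)
  moreover have "inj_on (half_graph_mis n k) {..k}"
  proof (rule linorder_inj_onI')
    fix s t assume "s \<in> {..k}" "t \<in> {..k}" "s < t"
    then have "s \<in> half_graph_mis n k s" "s \<notin> half_graph_mis n k t"
      unfolding half_graph_mis_def by auto
    then show "half_graph_mis n k s \<noteq> half_graph_mis n k t" by blast
  qed
  ultimately show ?thesis
    unfolding i_max_def by (simp add: card_image)
qed

theorem corollary3p2:
  shows "(\<forall>(V :: 'a set) E. simple_graph V E \<and> bipartite V E \<and> twin_free V E \<longrightarrow>
            i_max V E \<ge> card V div 2 + 1)
       \<and> (\<forall>n. \<exists>(V :: nat set) E. simple_graph V E \<and> bipartite V E \<and> twin_free V E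
            \<and> card V = n \<and> i_max V E = n div 2 + 1)"
proof (intro conjI allI impI)
  fix V :: "'a set" and E
  assume "simple_graph V E \<and> bipartite V E \<and> twin_free V E"
  then show "i_max V E \<ge> card V div 2 + 1"
    using i_max_ge_bipartite_twin_free by blast
next
  fix n :: nat
  have "2 * (n div 2) \<le> n" "n \<le> 2 * (n div 2) + 1"
    by auto
  then show "\<exists>(V :: nat set) E. simple_graph V E \<and> bipartite V E \<and> twin_free V E
      \<and> card V = n \<and> i_max V E = n div 2 + 1"
    using simple_graph_half_graph bipartite_half_graph twin_free_half_graph i_max_half_graph
    by (intro exI[of _ "{0..<n}"] exI[of _ "half_graph (n div 2)"]) simp
qed

end
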